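(* Let $\rho$ be an $n$-qubit density matrix and define $\vec z\in\mathbb{C}^n$ by $z_i=\langle e_i|\rho|0^n\rangle$. If $\langle0^n|\rho|0^n\rangle=2/3+c$ for some $c>0$, then every $n$-qubit pure product state $|\pi\rangle$ satisfies \[ \langle\pi|\rho|\pi\rangle\le\langle0^n|\rho|0^n\rangle+\min\Big\{3\|\vec z\|_2,\ \frac{\|\vec z\|_2^2}{c}\Big\}. \]
   Context: $|e_i\rangle$ denotes the $n$-qubit computational basis state with $|1\rangle$ in position $i$ and $|0\rangle$ elsewhere; $|0^n\rangle$ is the all-zeros basis state. *)

theory Defs
  imports Complex_Main
begin

text \<open>n-qubit states/operators are indexed by computational basis indices j < 2^n;
  bit i of j (i.e. odd (j div 2^i)) is the state of qubit i. Thus the basis state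
  e_i (|1> in position i, |0> elsewhere) has index 2^i and 0^n has index 0.
  An operator is a function rho :: nat => nat => complex, rho j k = <j|rho|k>.\<close>

definition quad_form :: "nat \<Rightarrow> (nat \<Rightarrow> nat \<Rightarrow> complex) \<Rightarrow> (nat \<Rightarrow> complex) \<Rightarrow> complex" where
  "quad_form n \<rho> v = (\<Sum>j<2^n. \<Sum>k<2^n. cnj (v j) * \<rho> j k * v k)"

definition density_matrix :: "nat \<Rightarrow> (nat \<Rightarrow> nat \<Rightarrow> complex) \<Rightarrow> bool" where
  "density_matrix n \<rho> \<longleftrightarrow>
     (\<forall>j<2^n. \<forall>k<2^n. \<rho> k j = cnj (\<rho> j k)) \<and>
     (\<forall>v. 0 \<le> Re (quad_form n \<rho> v)) \<and>
     (\<Sum>j<2^n. \<rho> j j) = 1"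

definition pure_product_state :: "nat \<Rightarrow> (nat \<Rightarrow> complex) \<Rightarrow> bool" where
  "pure_product_state n \<psi> \<longleftrightarrow>
     (\<exists>a b :: nat \<Rightarrow> complex.
        (\<forall>i<n. (cmod (a i))\<^sup>2 + (cmod (b i))\<^sup>2 = 1) \<and>
        (\<forall>j<2^n. \<psi> j = (\<Prod>i<n. if odd (j div 2^i) then b i else a i)))"

definition zvec_norm :: "nat \<Rightarrow> (nat \<Rightarrow> nat \<Rightarrow> complex) \<Rightarrow> real" where
  "zvec_norm n \<rho> = sqrt (\<Sum>i<n. (cmod (\<rho> (2^i) 0))\<^sup>2)"

end

theory Submission
  imports Defs "HOL-Analysis.L2_Norm"
begin

text \<open>
  Write \<open>\<pi> = \<pi>\<^sub>0 |0\<^sup>n\<rangle> + r\<^sub>1 + r\<^sub>2\<close>, splitting by Hamming weight 0, 1 and at least 2, and let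
  \<open>\<beta>, q, m\<close> be the squared norms of the three parts and \<open>p = \<langle>0\<^sup>n|\<rho>|0\<^sup>n\<rangle>\<close>. Positivity of \<open>\<rho>\<close>
  bounds \<open>\<langle>r|\<rho>|r\<rangle>\<close> by \<open>|r|\<^sup>2\<close> times the diagonal mass of \<open>\<rho>\<close> on the support of \<open>r\<close>,
  which is at most \<open>1 - p\<close> away from \<open>0\<^sup>n\<close>; Cauchy-Schwarz bounds \<open>\<langle>0\<^sup>n|\<rho>|r\<^sub>1\<rangle>\<close> by
  \<open>|z| \<surd>q\<close>, and a Cauchy-Schwarz inequality weighted by \<open>q\<close> and \<open>m\<close> separates \<open>r\<^sub>2\<close> from the
  rest. Altogether \<open>\<langle>\<pi>|\<rho>|\<pi>\<rangle> \<le> p - 3/2 c (1 - \<beta>) + 2 |z| w\<close> with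
  \<open>w = (1 - \<beta>) \<surd>(\<beta>/q)\<close>, as long as \<open>2 \<beta> (1 - \<beta>) \<le> q (1 + \<beta>)\<close>, which also gives
  \<open>w\<^sup>2 \<le> 1 - \<beta>\<close>. Then \<open>w \<le> 1\<close> yields the bound \<open>3 |z|\<close> and AM-GM,
  \<open>2 |z| w \<le> |z|\<^sup>2/c + c w\<^sup>2\<close>, the bound \<open>|z|\<^sup>2/c\<close>.

  The condition on \<open>\<beta>\<close> and \<open>q\<close> is where product states enter: with \<open>x\<^sub>i = |\<langle>0|\<pi>\<^sub>i\<rangle>|\<^sup>2\<close>
  one has \<open>\<beta> = \<Prod>\<^sub>i x\<^sub>i\<close> and \<open>q = \<Sum>\<^sub>i (1 - x\<^sub>i) \<Prod>\<^bsub>l \<noteq> i\<^esub> x\<^sub>l\<close>, and the inequality follows by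
  induction on the number of qubits.
\<close>

section \<open>Sesquilinear forms on \<open>n\<close>-qubit vectors\<close>

definition sesq_form ::
    "nat \<Rightarrow> (nat \<Rightarrow> nat \<Rightarrow> complex) \<Rightarrow> (nat \<Rightarrow> complex) \<Rightarrow> (nat \<Rightarrow> complex) \<Rightarrow> complex" where
  "sesq_form n \<rho> u v = (\<Sum>j<2^n. \<Sum>k<2^n. cnj (u j) * \<rho> j k * v k)"

definition ket :: "nat \<Rightarrow> complex \<Rightarrow> nat \<Rightarrow> complex" where
  "ket j a = (\<lambda>i. if i = j then a else 0)"

definition zero_outside :: "nat set \<Rightarrow> (nat \<Rightarrow> complex) \<Rightarrow> nat \<Rightarrow> complex" where
  "zero_outside S v = (\<lambda>j. if j \<in> S then v j else 0)"

definition diag_weight :: "nat \<Rightarrow> (nat \<Rightarrow> nat \<Rightarrow> complex) \<Rightarrow> nat set \<Rightarrow> real" where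
  "diag_weight n \<rho> S = (\<Sum>k<2^n. if k \<in> S then Re (\<rho> k k) else 0)"

definition sq_norm :: "nat \<Rightarrow> (nat \<Rightarrow> complex) \<Rightarrow> real" where
  "sq_norm n v = (\<Sum>j<2^n. (cmod (v j))\<^sup>2)"

definition weight_one_indices :: "nat \<Rightarrow> nat set" where
  "weight_one_indices n = (\<lambda>i. 2^i) ` {..<n}"

lemma quad_form_eq_sesq_form: "quad_form n \<rho> v = sesq_form n \<rho> v v"
  by (simp add: quad_form_def sesq_form_def)

lemma sesq_form_add_left: "sesq_form n \<rho> (\<lambda>j. u j + w j) v = sesq_form n \<rho> u v + sesq_form n \<rho> w v"
  unfolding sesq_form_def by (simp add: distrib_right sum.distrib)

lemma sesq_form_add_right: "sesq_form n \<rho> v (\<lambda>j. u j + w j) = sesq_form n \<rho> v u + sesq_form n \<rho> v w"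
  unfolding sesq_form_def by (simp add: distrib_left sum.distrib)

lemma sesq_form_scale_left: "sesq_form n \<rho> (\<lambda>j. a * u j) v = cnj a * sesq_form n \<rho> u v"
  unfolding sesq_form_def by (simp add: sum_distrib_left mult.assoc)

lemma sesq_form_scale_right: "sesq_form n \<rho> v (\<lambda>j. a * u j) = a * sesq_form n \<rho> v u"
  unfolding sesq_form_def by (simp add: sum_distrib_left mult.left_commute)

lemma sesq_form_ket_left:
  assumes "j < 2^n"
  shows "sesq_form n \<rho> (ket j a) v = cnj a * (\<Sum>k<2^n. \<rho> j k * v k)"
proof -
  have "sesq_form n \<rho> (ket j a) v = (\<Sum>i<2^n. if i = j then cnj a * (\<Sum>k<2^n. \<rho> j k * v k) else 0)"
    unfolding sesq_form_def ket_def by (intro sum.cong refl) (simp add: sum_distrib_left mult.assoc)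
  with assms show ?thesis by simp
qed

lemma sesq_form_ket_ket:
  assumes "j < 2^n" "k < 2^n"
  shows "sesq_form n \<rho> (ket j a) (ket k b) = cnj a * \<rho> j k * b"
proof -
  have "(\<Sum>l<2^n. \<rho> j l * ket k b l) = (\<Sum>l<2^n. if l = k then \<rho> j k * b else 0)"
    unfolding ket_def by (intro sum.cong) simp_all
  with assms show ?thesis by (simp add: sesq_form_ket_left mult.assoc)
qed

lemma sum_weight_one_indices:
  fixes f :: "nat \<Rightarrow> 'a::comm_monoid_add"
  shows "(\<Sum>j<2^n. if j \<in> weight_one_indices n then f j else 0) = (\<Sum>i<n. f (2^i))"
proof -
  have "weight_one_indices n \<subseteq> {..<2^n}" by (auto simp: weight_one_indices_def)
  then have "(\<Sum>j<2^n. if j \<in> weight_one_indices n then f j else 0) = sum f (weight_one_indices n)"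
    by (simp add: sum.inter_restrict[symmetric] Int_absorb1)
  also have "\<dots> = (\<Sum>i<n. f (2^i))"
    unfolding weight_one_indices_def by (rule sum.reindex_cong[where l = "\<lambda>i. 2^i"]) (auto simp: inj_on_def)
  finally show ?thesis .
qed

lemma sum_split_zero_weight_one:
  fixes f :: "nat \<Rightarrow> 'a::comm_monoid_add"
  shows "(\<Sum>j<2^n. f j) = f 0 + (\<Sum>j<2^n. if j \<in> weight_one_indices n then f j else 0)
           + (\<Sum>j<2^n. if j \<in> - insert 0 (weight_one_indices n) then f j else 0)"
proof -
  have "0 \<notin> weight_one_indices n" by (auto simp: weight_one_indices_def)
  then have "(\<Sum>j<2^n. f j) = (\<Sum>j<2^n. (if j = 0 then f j else 0)
       + (if j \<in> weight_one_indices n then f j else 0)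
       + (if j \<in> - insert 0 (weight_one_indices n) then f j else 0))"
    by (intro sum.cong) auto
  also have "\<dots> = (\<Sum>j<2^n. if j = 0 then f j else 0)
       + (\<Sum>j<2^n. if j \<in> weight_one_indices n then f j else 0)
       + (\<Sum>j<2^n. if j \<in> - insert 0 (weight_one_indices n) then f j else 0)"
    by (simp only: sum.distrib)
  finally show ?thesis by simp
qed

lemma sq_norm_zero_outside:
  "sq_norm n (zero_outside S v) = (\<Sum>j<2^n. if j \<in> S then (cmod (v j))\<^sup>2 else 0)"
  unfolding sq_norm_def zero_outside_def by (intro sum.cong) auto

section \<open>Positive semidefinite Hermitian matrices\<close>

lemma quadratic_nonneg_imp_discrim_le:
  fixes a b c :: real
  assumes "0 \<le> a" and nonneg: "\<And>t. 0 \<le> a * t\<^sup>2 + 2 * b * t + c"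
  shows "b\<^sup>2 \<le> a * c"
proof (cases "a = 0")
  case True
  have "b = 0"
  proof (rule ccontr)
    assume "b \<noteq> 0"
    with nonneg[of "- (c + 1) / (2 * b)"] True show False by (simp add: field_simps)
  qed
  with True show ?thesis by simp
next
  case False
  with \<open>0 \<le> a\<close> have "0 < a" by simp
  with nonneg[of "- b / a"] have "0 \<le> (a * c - b\<^sup>2) / a" by (simp add: field_simps power2_eq_square)
  with \<open>0 < a\<close> show ?thesis by (simp add: zero_le_divide_iff)
qed

lemma mult_le_half_weighted_squares:
  fixes a b c x y :: real
  assumes "0 \<le> a" "0 \<le> b" "0 \<le> x" "0 \<le> y" "0 \<le> c" "c\<^sup>2 \<le> x * y"
  shows "a * b * c \<le> (a\<^sup>2 * y + b\<^sup>2 * x) / 2"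
proof -
  have "(a * b * c)\<^sup>2 = (a\<^sup>2 * b\<^sup>2) * c\<^sup>2" by (simp add: power_mult_distrib)
  also have "\<dots> \<le> (a\<^sup>2 * b\<^sup>2) * (x * y)" using assms(6) by (rule mult_left_mono) simp
  also have "\<dots> = (a\<^sup>2 * y) * (b\<^sup>2 * x)" by simp
  also have "\<dots> \<le> ((a\<^sup>2 * y + b\<^sup>2 * x) / 2)\<^sup>2"
    using sum_squares_ge_zero[of "a\<^sup>2 * y - b\<^sup>2 * x" 0] by (simp add: power2_eq_square field_simps)
  finally show ?thesis
    by (rule power2_le_imp_le) (use assms in simp)
qed

locale psd_matrix =
  fixes n :: nat and \<rho> :: "nat \<Rightarrow> nat \<Rightarrow> complex"
  assumes hermitian: "\<forall>j<2^n. \<forall>k<2^n. \<rho> k j = cnj (\<rho> j k)"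
      (* loops as a simp rule, so it is only ever instantiated by blast *)
    and quad_form_nonneg: "\<And>v. 0 \<le> Re (quad_form n \<rho> v)"
begin

lemma sesq_form_swap: "sesq_form n \<rho> v u = cnj (sesq_form n \<rho> u v)"
proof -
  have "sesq_form n \<rho> v u = (\<Sum>k<2^n. \<Sum>j<2^n. cnj (v j) * \<rho> j k * u k)"
    unfolding sesq_form_def by (rule sum.swap)
  also have "\<dots> = (\<Sum>k<2^n. \<Sum>j<2^n. cnj (cnj (u k) * \<rho> k j * v j))"
  proof (intro sum.cong refl)
    fix k j :: nat assume "k \<in> {..<2^n}" "j \<in> {..<2^n}"
    then have "\<rho> j k = cnj (\<rho> k j)" using hermitian by blast
    then show "cnj (v j) * \<rho> j k * u k = cnj (cnj (u k) * \<rho> k j * v j)" by (simp add: mult_ac)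
  qed
  also have "\<dots> = cnj (sesq_form n \<rho> u v)" by (simp add: sesq_form_def)
  finally show ?thesis .
qed

lemma Re_quad_form_add:
  "Re (quad_form n \<rho> (\<lambda>j. u j + w j))
     = Re (quad_form n \<rho> u) + Re (quad_form n \<rho> w) + 2 * Re (sesq_form n \<rho> u w)"
  using sesq_form_swap[of w u]
  by (simp add: quad_form_eq_sesq_form sesq_form_add_left sesq_form_add_right)

lemma sesq_form_Cauchy_Schwarz:
  "(Re (sesq_form n \<rho> u v))\<^sup>2 \<le> Re (quad_form n \<rho> u) * Re (quad_form n \<rho> v)"
proof (rule quadratic_nonneg_imp_discrim_le)
  fix t :: real
  have "0 \<le> Re (quad_form n \<rho> (\<lambda>j. complex_of_real t * u j + v j))"
    by (rule quad_form_nonneg)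
  then show "0 \<le> Re (quad_form n \<rho> u) * t\<^sup>2 + 2 * Re (sesq_form n \<rho> u v) * t + Re (quad_form n \<rho> v)"
    unfolding Re_quad_form_add by (simp add: quad_form_eq_sesq_form sesq_form_scale_left
        sesq_form_scale_right power2_eq_square algebra_simps)
qed (rule quad_form_nonneg)

lemma Re_quad_form_add_le:
  "Re (quad_form n \<rho> (\<lambda>j. u j + w j))
     \<le> (sqrt (Re (quad_form n \<rho> u)) + sqrt (Re (quad_form n \<rho> w)))\<^sup>2"
proof -
  have "Re (sesq_form n \<rho> u w) \<le> sqrt (Re (quad_form n \<rho> u) * Re (quad_form n \<rho> w))"
    using sesq_form_Cauchy_Schwarz by (rule real_le_rsqrt)
  then show ?thesis
    using quad_form_nonneg[of u] quad_form_nonneg[of w]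
    by (simp add: Re_quad_form_add power2_sum real_sqrt_mult)
qed

lemma diag_nonneg: "k < 2^n \<Longrightarrow> 0 \<le> Re (\<rho> k k)"
  using quad_form_nonneg[of "ket k 1"] by (simp add: quad_form_eq_sesq_form sesq_form_ket_ket)

lemma diag_real:
  assumes "k < 2^n"
  shows "\<rho> k k = complex_of_real (Re (\<rho> k k))"
proof -
  have "\<rho> k k = cnj (\<rho> k k)" using hermitian assms by blast
  then have "Im (\<rho> k k) = Im (cnj (\<rho> k k))" by (rule arg_cong)
  then show ?thesis by (simp add: complex_eq_iff)
qed

lemma norm_entry_sq_le:
  assumes "j < 2^n" "k < 2^n"
  shows "(cmod (\<rho> j k))\<^sup>2 \<le> Re (\<rho> j j) * Re (\<rho> k k)"
proof (cases "\<rho> j k = 0")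
  case True
  then show ?thesis using diag_nonneg assms by simp
next
  case False
  let ?r = "(cmod (\<rho> j k))\<^sup>2" and ?w = "cnj (\<rho> j k)"
  have "Re (sesq_form n \<rho> (ket j 1) (ket k ?w)) = ?r"
    using assms by (simp add: sesq_form_ket_ket flip: complex_norm_square)
  moreover have "Re (quad_form n \<rho> (ket k ?w)) = ?r * Re (\<rho> k k)"
  proof -
    have "quad_form n \<rho> (ket k ?w) = \<rho> k k * (\<rho> j k * cnj (\<rho> j k))"
      using assms by (simp add: quad_form_eq_sesq_form sesq_form_ket_ket mult_ac)
    also have "\<dots> = complex_of_real (?r * Re (\<rho> k k))"
      by (subst diag_real[OF assms(2)]) (simp add: mult.commute flip: complex_norm_square)
    finally show ?thesis by simp
  qed
  ultimately have "?r * ?r \<le> ?r * (Re (\<rho> j j) * Re (\<rho> k k))"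
    using sesq_form_Cauchy_Schwarz[of "ket j 1" "ket k ?w"] assms
    by (simp add: quad_form_eq_sesq_form sesq_form_ket_ket power2_eq_square mult_ac)
  moreover have "0 < ?r" using False by simp
  ultimately show ?thesis by (rule mult_le_cancel_left_pos[THEN iffD1, rotated])
qed

lemma quad_form_le_diag_weight:
  assumes supp: "\<forall>j<2^n. j \<notin> S \<longrightarrow> v j = 0"
  shows "Re (quad_form n \<rho> v) \<le> sq_norm n v * diag_weight n \<rho> S"
proof -
  define d where "d k = (if k \<in> S then Re (\<rho> k k) else 0)" for k
  have d: "0 \<le> d k" if "k < 2^n" for k using diag_nonneg that by (simp add: d_def)
  have "Re (quad_form n \<rho> v) = (\<Sum>j<2^n. \<Sum>k<2^n. Re (cnj (v j) * \<rho> j k * v k))"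
    by (simp add: quad_form_def Re_sum)
  also have "\<dots> \<le> (\<Sum>j<2^n. \<Sum>k<2^n. ((cmod (v j))\<^sup>2 * d k + (cmod (v k))\<^sup>2 * d j) / 2)"
  proof (intro sum_mono)
    fix j k :: nat assume j: "j \<in> {..<2^n}" and k: "k \<in> {..<2^n}"
    show "Re (cnj (v j) * \<rho> j k * v k) \<le> ((cmod (v j))\<^sup>2 * d k + (cmod (v k))\<^sup>2 * d j) / 2"
    proof (cases "j \<in> S \<and> k \<in> S")
      case True
      have "Re (cnj (v j) * \<rho> j k * v k) \<le> cmod (v j) * cmod (v k) * cmod (\<rho> j k)"
        using complex_Re_le_cmod[of "cnj (v j) * \<rho> j k * v k"] by (simp add: norm_mult mult_ac)
      also have "\<dots> \<le> ((cmod (v j))\<^sup>2 * Re (\<rho> k k) + (cmod (v k))\<^sup>2 * Re (\<rho> j j)) / 2"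
        using j k diag_nonneg norm_entry_sq_le by (intro mult_le_half_weighted_squares) auto
      finally show ?thesis using True by (simp add: d_def)
    next
      case False
      with supp j k have "v j = 0 \<or> v k = 0" by auto
      with d j k show ?thesis by auto
    qed
  qed
  also have "\<dots> = ((\<Sum>j<2^n. \<Sum>k<2^n. (cmod (v j))\<^sup>2 * d k)
                   + (\<Sum>j<2^n. \<Sum>k<2^n. (cmod (v k))\<^sup>2 * d j)) / 2"
    by (simp add: sum.distrib sum_divide_distrib add_divide_distrib)
  also have "(\<Sum>j<2^n. \<Sum>k<2^n. (cmod (v k))\<^sup>2 * d j) = (\<Sum>j<2^n. \<Sum>k<2^n. (cmod (v j))\<^sup>2 * d k)"
    by (rule sum.swap)
  also have "(\<Sum>j<2^n. \<Sum>k<2^n. (cmod (v j))\<^sup>2 * d k) = sq_norm n v * diag_weight n \<rho> S"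
    by (simp add: sq_norm_def diag_weight_def d_def sum_product)
  finally show ?thesis by simp
qed

lemma diag_weight_nonneg: "0 \<le> diag_weight n \<rho> S"
  unfolding diag_weight_def using diag_nonneg by (intro sum_nonneg) simp

lemma Re_sesq_form_ket_0_weight_one_le:
  "Re (sesq_form n \<rho> (ket 0 a) (zero_outside (weight_one_indices n) v))
     \<le> cmod a * zvec_norm n \<rho> * sqrt (\<Sum>i<n. (cmod (v (2^i)))\<^sup>2)"
proof -
  have "sesq_form n \<rho> (ket 0 a) (zero_outside (weight_one_indices n) v)
      = cnj a * (\<Sum>i<n. \<rho> 0 (2^i) * v (2^i))"
    by (simp add: sesq_form_ket_left zero_outside_def if_distrib sum_weight_one_indices cong: if_cong)
  then have "Re (sesq_form n \<rho> (ket 0 a) (zero_outside (weight_one_indices n) v))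
      \<le> cmod a * cmod (\<Sum>i<n. \<rho> 0 (2^i) * v (2^i))"
    by (metis complex_Re_le_cmod complex_mod_cnj norm_mult)
  also have "\<dots> \<le> cmod a * (\<Sum>i<n. cmod (\<rho> 0 (2^i)) * cmod (v (2^i)))"
    by (intro mult_left_mono) (simp_all add: norm_sum[THEN order_trans] norm_mult)
  also have "\<dots> \<le> cmod a * (L2_set (\<lambda>i. cmod (\<rho> 0 (2^i))) {..<n} * L2_set (\<lambda>i. cmod (v (2^i))) {..<n})"
    using L2_set_mult_ineq[of "\<lambda>i. cmod (\<rho> 0 (2^i))" "\<lambda>i. cmod (v (2^i))" "{..<n}"]
    by (intro mult_left_mono) simp_all
  also have "L2_set (\<lambda>i. cmod (\<rho> 0 (2^i))) {..<n} = zvec_norm n \<rho>"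
  proof -
    have "\<rho> 0 (2^i) = cnj (\<rho> (2^i) 0)" if "i < n" for i
    proof -
      from that have "(2::nat)^i < 2^n" "(0::nat) < 2^n" by simp_all
      with hermitian show ?thesis by blast
    qed
    then show ?thesis unfolding L2_set_def zvec_norm_def by (intro arg_cong[where f = sqrt] sum.cong) simp_all
  qed
  finally show ?thesis by (simp add: L2_set_def mult.assoc)
qed

lemma Re_quad_form_ket:
  assumes "k < 2^n"
  shows "Re (quad_form n \<rho> (ket k a)) = (cmod a)\<^sup>2 * Re (\<rho> k k)"
proof -
  have "quad_form n \<rho> (ket k a) = \<rho> k k * (a * cnj a)"
    using assms by (simp add: quad_form_eq_sesq_form sesq_form_ket_ket mult_ac)
  also have "\<dots> = complex_of_real ((cmod a)\<^sup>2 * Re (\<rho> k k))"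
    by (subst diag_real[OF assms]) (simp add: mult.commute flip: complex_norm_square)
  finally show ?thesis by simp
qed

lemma Re_quad_form_low_weight_le:
  fixes v :: "nat \<Rightarrow> complex"
  defines "q \<equiv> \<Sum>i<n. (cmod (v (2^i)))\<^sup>2"
  shows "Re (quad_form n \<rho> (\<lambda>j. ket 0 (v 0) j + zero_outside (weight_one_indices n) v j))
     \<le> (cmod (v 0))\<^sup>2 * Re (\<rho> 0 0) + 2 * zvec_norm n \<rho> * cmod (v 0) * sqrt q
       + q * diag_weight n \<rho> (weight_one_indices n)"
proof -
  let ?r = "zero_outside (weight_one_indices n) v"
  have "sq_norm n ?r = q"
    by (simp add: q_def sq_norm_zero_outside sum_weight_one_indices)
  then have "Re (quad_form n \<rho> ?r) \<le> q * diag_weight n \<rho> (weight_one_indices n)"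
    using quad_form_le_diag_weight[of "weight_one_indices n" ?r] by (simp add: zero_outside_def)
  with Re_sesq_form_ket_0_weight_one_le[of "v 0" v] show ?thesis
    by (simp add: Re_quad_form_add Re_quad_form_ket q_def mult_ac)
qed

end

lemma density_matrix_imp_psd_matrix: "density_matrix n \<rho> \<Longrightarrow> psd_matrix n \<rho>"
  unfolding density_matrix_def psd_matrix_def by blast

lemma zvec_norm_nonneg: "0 \<le> zvec_norm n \<rho>"
  by (simp add: zvec_norm_def sum_nonneg)

section \<open>Product states\<close>

definition product_amp :: "(nat \<Rightarrow> complex) \<Rightarrow> (nat \<Rightarrow> complex) \<Rightarrow> nat \<Rightarrow> nat \<Rightarrow> complex" where
  "product_amp a b n j = (\<Prod>i<n. if odd (j div 2^i) then b i else a i)"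

lemma sum_lessThan_double:
  fixes f :: "nat \<Rightarrow> 'a::comm_monoid_add"
  shows "(\<Sum>j<2 * N. f j) = (\<Sum>j<N. f j) + (\<Sum>k<N. f (N + k))"
proof -
  have "(\<Sum>j<2 * N. f j) = (\<Sum>j\<in>{0..<N}. f j) + (\<Sum>j\<in>{N..<N + N}. f j)"
    by (simp add: mult_2 atLeast0LessThan[symmetric] sum.atLeastLessThan_concat)
  also have "(\<Sum>j\<in>{N..<N + N}. f j) = (\<Sum>k\<in>{0..<N}. f (N + k))"
    using sum.atLeastLessThan_shift_bounds[of f 0 N N] by (simp add: comp_def)
  finally show ?thesis by (simp add: atLeast0LessThan)
qed

lemma odd_add_pow2_div_pow2:
  fixes k i n :: nat
  assumes "i < n"
  shows "odd ((2^n + k) div 2^i) \<longleftrightarrow> odd (k div 2^i)"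
proof -
  have "(2::nat)^n = 2^(n - i) * 2^i" using assms by (simp flip: power_add)
  then have "(2^n + k) div 2^i = 2^(n - i) + k div 2^i" by simp
  with assms show ?thesis by simp
qed

lemma odd_pow2_div_pow2_iff: "odd ((2::nat)^i div 2^l) \<longleftrightarrow> l = i"
  by (simp flip: bit_iff_odd add: bit_exp_iff)

lemma product_amp_Suc:
  "product_amp a b (Suc n) j = product_amp a b n j * (if odd (j div 2^n) then b n else a n)"
  by (simp add: product_amp_def)

lemma product_amp_add_pow2: "product_amp a b n (2^n + k) = product_amp a b n k"
  unfolding product_amp_def by (intro prod.cong refl) (simp add: odd_add_pow2_div_pow2)

lemma product_amp_0: "product_amp a b n 0 = (\<Prod>i<n. a i)"
  by (simp add: product_amp_def)

lemma product_amp_pow2: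
  assumes "i < n"
  shows "product_amp a b n (2^i) = b i * (\<Prod>l\<in>{..<n} - {i}. a l)"
proof -
  have "product_amp a b n (2^i) = (\<Prod>l<n. if l = i then b l else a l)"
    unfolding product_amp_def by (intro prod.cong refl) (simp add: odd_pow2_div_pow2_iff)
  also have "\<dots> = b i * (\<Prod>l\<in>{..<n} - {i}. if l = i then b l else a l)"
    using assms by (subst prod.remove[of _ i]) auto
  also have "(\<Prod>l\<in>{..<n} - {i}. if l = i then b l else a l) = (\<Prod>l\<in>{..<n} - {i}. a l)"
    by (rule prod.cong) auto
  finally show ?thesis .
qed

lemma sq_norm_product_amp:
  "sq_norm n (product_amp a b n) = (\<Prod>i<n. (cmod (a i))\<^sup>2 + (cmod (b i))\<^sup>2)"
proof (induction n)
  case 0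
  then show ?case by (simp add: sq_norm_def product_amp_def)
next
  case (Suc n)
  have "sq_norm (Suc n) (product_amp a b (Suc n))
      = (\<Sum>j<2^n. (cmod (product_amp a b n j * a n))\<^sup>2)
      + (\<Sum>k<2^n. (cmod (product_amp a b n k * b n))\<^sup>2)"
    unfolding sq_norm_def power_Suc sum_lessThan_double product_amp_Suc product_amp_add_pow2
    by (intro arg_cong2[where f = "(+)"] sum.cong) simp_all
  also have "\<dots> = sq_norm n (product_amp a b n) * ((cmod (a n))\<^sup>2 + (cmod (b n))\<^sup>2)"
    by (simp add: sq_norm_def norm_mult power_mult_distrib sum_distrib_right distrib_left)
  finally show ?case using Suc.IH by simp
qed

lemma sum_prod_except_lessThan_Suc:
  fixes x :: "nat \<Rightarrow> real"
  shows "(\<Sum>i<Suc n. (1 - x i) * (\<Prod>l\<in>{..<Suc n} - {i}. x l))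
       = x n * (\<Sum>i<n. (1 - x i) * (\<Prod>l\<in>{..<n} - {i}. x l)) + (1 - x n) * (\<Prod>i<n. x i)"
proof -
  have "\<And>i. i < n \<Longrightarrow> {..<Suc n} - {i} = insert n ({..<n} - {i})" by auto
  then have "(\<Sum>i<n. (1 - x i) * (\<Prod>l\<in>{..<Suc n} - {i}. x l))
           = (\<Sum>i<n. x n * ((1 - x i) * (\<Prod>l\<in>{..<n} - {i}. x l)))"
    by (intro sum.cong) (simp_all add: mult_ac)
  moreover have "{..<Suc n} - {n} = {..<n}" by auto
  ultimately show ?thesis by (simp add: sum_distrib_left)
qed

lemma product_weight_ineq:
  fixes x :: "nat \<Rightarrow> real"
  assumes "\<forall>i<n. 0 \<le> x i \<and> x i \<le> 1"
  shows "2 * (\<Prod>i<n. x i) * (1 - (\<Prod>i<n. x i))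
       \<le> (\<Sum>i<n. (1 - x i) * (\<Prod>l\<in>{..<n} - {i}. x l)) * (1 + (\<Prod>i<n. x i))"
  using assms
proof (induction n)
  case 0
  then show ?case by simp
next
  case (Suc n)
  define B where "B = (\<Prod>i<n. x i)"
  define Q where "Q = (\<Sum>i<n. (1 - x i) * (\<Prod>l\<in>{..<n} - {i}. x l))"
  define y where "y = x n"
  have IH: "2 * B * (1 - B) \<le> Q * (1 + B)" using Suc unfolding B_def Q_def by simp
  have y: "0 \<le> y" "y \<le> 1" using Suc.prems unfolding y_def by simp_all
  have B: "0 \<le> B" "B \<le> 1" using Suc.prems unfolding B_def by (auto intro: prod_nonneg prod_le_1)
  have "(y * (1 + B * y)) * (2 * B * (1 - B)) + (1 - y) * B * (1 + B * y) * (1 + B)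
      \<le> (y * (1 + B * y)) * (Q * (1 + B)) + (1 - y) * B * (1 + B * y) * (1 + B)"
    using IH y B by (intro add_right_mono mult_left_mono) simp_all
  moreover have "(y * (1 + B * y)) * (2 * B * (1 - B)) + (1 - y) * B * (1 + B * y) * (1 + B)
      = 2 * (B * y) * (1 - B * y) * (1 + B) + B * (1 - y) * ((1 - y) * (1 + B) + y * (1 - B)\<^sup>2)"
    by (simp add: algebra_simps power2_eq_square)
  moreover have "0 \<le> B * (1 - y) * ((1 - y) * (1 + B) + y * (1 - B)\<^sup>2)" using y B by simp
  ultimately have "2 * (B * y) * (1 - B * y) * (1 + B) \<le> ((y * Q + (1 - y) * B) * (1 + B * y)) * (1 + B)"
    by (simp add: algebra_simps)
  then have "2 * (B * y) * (1 - B * y) \<le> (y * Q + (1 - y) * B) * (1 + B * y)"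
    using B by (simp add: mult_le_cancel_right_pos add_pos_nonneg)
  then show ?case
    unfolding sum_prod_except_lessThan_Suc B_def Q_def y_def by (simp add: mult_ac)
qed

lemma pure_product_stateE:
  assumes "pure_product_state n \<pi>"
  obtains a b where "\<forall>i<n. (cmod (a i))\<^sup>2 + (cmod (b i))\<^sup>2 = 1" "\<forall>j<2^n. \<pi> j = product_amp a b n j"
  using assms unfolding pure_product_state_def product_amp_def by blast

lemma pure_product_state_sq_norm:
  assumes "pure_product_state n \<pi>"
  shows "sq_norm n \<pi> = 1"
proof -
  obtain a b where ab: "\<forall>i<n. (cmod (a i))\<^sup>2 + (cmod (b i))\<^sup>2 = 1"
    and \<pi>: "\<forall>j<2^n. \<pi> j = product_amp a b n j"
    using assms by (rule pure_product_stateE)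
  have "sq_norm n \<pi> = sq_norm n (product_amp a b n)"
    unfolding sq_norm_def using \<pi> by simp
  also have "\<dots> = 1" using ab by (simp add: sq_norm_product_amp)
  finally show ?thesis .
qed

lemma pure_product_state_weight_ineq:
  assumes "pure_product_state n \<pi>"
  shows "2 * (cmod (\<pi> 0))\<^sup>2 * (1 - (cmod (\<pi> 0))\<^sup>2)
       \<le> (\<Sum>i<n. (cmod (\<pi> (2^i)))\<^sup>2) * (1 + (cmod (\<pi> 0))\<^sup>2)"
proof -
  obtain a b where ab: "\<forall>i<n. (cmod (a i))\<^sup>2 + (cmod (b i))\<^sup>2 = 1"
    and \<pi>: "\<forall>j<2^n. \<pi> j = product_amp a b n j"
    using assms by (rule pure_product_stateE)
  define x where "x i = (cmod (a i))\<^sup>2" for i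
  have x: "\<forall>i<n. 0 \<le> x i \<and> x i \<le> 1"
    using ab unfolding x_def by (metis le_add_same_cancel1 zero_le_power2)
  have "(cmod (\<pi> 0))\<^sup>2 = (\<Prod>i<n. x i)"
    using \<pi> by (simp add: product_amp_0 x_def prod_norm flip: prod_power_distrib)
  moreover have "(cmod (\<pi> (2^i)))\<^sup>2 = (1 - x i) * (\<Prod>l\<in>{..<n} - {i}. x l)" if "i < n" for i
  proof -
    have "(cmod (\<pi> (2^i)))\<^sup>2 = (cmod (b i))\<^sup>2 * (\<Prod>l\<in>{..<n} - {i}. x l)"
      using \<pi> that by (simp add: product_amp_pow2 x_def norm_mult prod_norm power_mult_distrib
          flip: prod_power_distrib)
    moreover have "(cmod (b i))\<^sup>2 = 1 - x i" using ab that by (simp add: x_def eq_diff_eq add.commute)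
    ultimately show ?thesis by simp
  qed
  ultimately show ?thesis using product_weight_ineq[OF x] by simp
qed

lemma square_add_le_weighted:
  fixes a b q m :: real
  assumes "0 < q" "0 < m"
  shows "(a + b)\<^sup>2 \<le> (q + m) / q * a\<^sup>2 + (q + m) / m * b\<^sup>2"
proof -
  have "(q + m) / q * a\<^sup>2 + (q + m) / m * b\<^sup>2 - (a + b)\<^sup>2 = (m * a - q * b)\<^sup>2 / (q * m)"
    using assms by (simp add: field_simps power2_eq_square)
  also have "\<dots> \<ge> 0" using assms by simp
  finally show ?thesis by simp
qed

text \<open>
  Here \<open>X\<close> and \<open>Y\<close> stand for \<open>\<langle>x|\<rho>|x\<rangle>\<close> and \<open>\<langle>y|\<rho>|y\<rangle>\<close>, where \<open>x\<close> is the part of \<open>\<pi>\<close> of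
  Hamming weight at most 1 and \<open>y\<close> the rest, \<open>P\<close> for \<open>\<langle>\<pi>|\<rho>|\<pi>\<rangle>\<close>, \<open>Z\<close> for \<open>|z|\<close>, and \<open>T1\<close>,
  \<open>T2\<close> for the diagonal mass of \<open>\<rho>\<close> on the indices of Hamming weight 1 and at least 2.
  For \<open>q = 0\<close> the division in the conclusion yields 0; this is harmless since then \<open>\<beta> \<in> {0, 1}\<close>.
\<close>

lemma estimates_imp_shifted_bound:
  fixes c p \<beta> q m T1 T2 Z X Y P :: real
  assumes c: "0 < c" and p: "p = 2/3 + c"
    and \<beta>: "0 \<le> \<beta>" and q: "0 \<le> q" and m: "0 \<le> m" and total: "\<beta> + q + m = 1"
    and weight: "2 * \<beta> * (1 - \<beta>) \<le> q * (1 + \<beta>)"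
    and T: "0 \<le> T1" "0 \<le> T2" "T1 + T2 = 1 - p"
    and X: "0 \<le> X" "X \<le> \<beta> * p + 2 * Z * sqrt \<beta> * sqrt q + q * T1"
    and Y: "0 \<le> Y" "Y \<le> m * T2"
    and P: "P \<le> (sqrt X + sqrt Y)\<^sup>2"
  shows "P \<le> p - 3/2 * c * (1 - \<beta>) + 2 * Z * ((1 - \<beta>) * sqrt \<beta> / sqrt q)"
proof (cases "q = 0")
  case True
  have "0 \<le> \<beta> * (1 - \<beta>)" using \<beta> total m True by simp
  with weight True have "\<beta> * (1 - \<beta>) = 0" by simp
  then consider "\<beta> = 0" | "\<beta> = 1" by auto
  then show ?thesis
  proof cases
    case 1
    with X True have "X = 0" by simp
    with P Y have "P \<le> m * T2" by simp
    also have "\<dots> \<le> T2" using T total 1 True by simp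
    finally show ?thesis using T c p 1 True by simp
  next
    case 2
    with Y total q m True have "Y = 0" by simp
    with P X True 2 show ?thesis by simp
  qed
next
  case False
  with q have "0 < q" by simp
  define u where "u = 1 - \<beta>"
  have u: "u = q + m" "0 \<le> u" using total m \<open>0 < q\<close> unfolding u_def by linarith+
  have "P \<le> u / q * X + u / m * Y"
  proof (cases "m = 0")
    case True
    with Y u \<open>0 < q\<close> P X show ?thesis by simp
  next
    case False
    with m have "0 < m" by simp
    from square_add_le_weighted[OF \<open>0 < q\<close> this, of "sqrt X" "sqrt Y"] P X Y u
    show ?thesis by simp
  qed
  also have "u / q * X \<le> u * \<beta> / q * p + 2 * Z * (u * sqrt \<beta> / sqrt q) + u * T1"
  proof -
    have "u / q * X \<le> u / q * (\<beta> * p + 2 * Z * sqrt \<beta> * sqrt q + q * T1)"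
      using X u \<open>0 < q\<close> by (intro mult_left_mono) simp_all
    also have "\<dots> = u * \<beta> / q * p + 2 * Z * sqrt \<beta> * (u / q * sqrt q) + u * T1"
      using \<open>0 < q\<close> by (simp add: algebra_simps)
    also have "u / q * sqrt q = u / sqrt q"
      using \<open>0 < q\<close> real_sqrt_mult_self[of q] by (simp add: divide_simps del: real_sqrt_mult_self)
    finally show ?thesis by (simp add: mult_ac)
  qed
  also have "u * \<beta> / q * p \<le> (1 + \<beta>) / 2 * p"
  proof (rule mult_right_mono)
    show "u * \<beta> / q \<le> (1 + \<beta>) / 2" using weight \<open>0 < q\<close> by (simp add: u_def pos_divide_le_eq mult_ac)
  qed (use p c in simp)
  also have "u / m * Y \<le> u * T2"
  proof (cases "m = 0")
    case False
    have "u / m * Y \<le> u / m * (m * T2)" using Y u m by (intro mult_left_mono) simp_all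
    with False show ?thesis by simp
  qed (use u T in simp)
  finally have "P \<le> (1 + \<beta>) / 2 * p + u * (T1 + T2) + 2 * Z * (u * sqrt \<beta> / sqrt q)"
    by (simp add: algebra_simps)
  also have "(1 + \<beta>) / 2 * p + u * (T1 + T2) = p - 3/2 * c * u"
    unfolding T(3) p u_def by (simp add: field_simps)
  finally show ?thesis unfolding u_def .
qed

lemma estimates_imp_bound:
  fixes c p \<beta> q m T1 T2 Z X Y P :: real
  assumes c: "0 < c" and p: "p = 2/3 + c"
    and \<beta>: "0 \<le> \<beta>" and q: "0 \<le> q" and m: "0 \<le> m" and total: "\<beta> + q + m = 1"
    and weight: "2 * \<beta> * (1 - \<beta>) \<le> q * (1 + \<beta>)"
    and T: "0 \<le> T1" "0 \<le> T2" "T1 + T2 = 1 - p"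
    and Z: "0 \<le> Z"
    and X: "0 \<le> X" "X \<le> \<beta> * p + 2 * Z * sqrt \<beta> * sqrt q + q * T1"
    and Y: "0 \<le> Y" "Y \<le> m * T2"
    and P: "P \<le> (sqrt X + sqrt Y)\<^sup>2"
  shows "P \<le> p + min (3 * Z) (Z\<^sup>2 / c)"
proof -
  define u where "u = 1 - \<beta>"
  define w where "w = u * sqrt \<beta> / sqrt q"
  have shifted: "P \<le> p - 3/2 * c * u + 2 * Z * w"
    unfolding u_def w_def by (rule estimates_imp_shifted_bound) fact+
  have u: "0 \<le> u" "u \<le> 1" using \<beta> q m total unfolding u_def by linarith+
  have "w\<^sup>2 \<le> u"
  proof (cases "q = 0")
    case False
    with q have "w\<^sup>2 = u * (u * \<beta> / q)"
      using \<beta> by (simp add: w_def power_mult_distrib power_divide power2_eq_square)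
    also have "\<dots> \<le> u * 1"
    proof (rule mult_left_mono)
      have "q * (1 + \<beta>) \<le> q * 2" using q u by (intro mult_left_mono) (simp_all add: u_def)
      with weight have "u * \<beta> \<le> q" by (simp add: u_def algebra_simps)
      with q False show "u * \<beta> / q \<le> 1" by simp
    qed (fact u)
    finally show ?thesis by simp
  qed (simp add: w_def u)
  have w: "0 \<le> w" using u \<beta> q by (simp add: w_def)
  have "w \<le> 1" using power_le_one_iff[OF w, of 2] \<open>w\<^sup>2 \<le> u\<close> u by simp
  have "2 * Z * w \<le> Z\<^sup>2 / c + c * w\<^sup>2"
    using sum_squares_ge_zero[of "Z - c * w" 0] c by (simp add: field_simps power2_eq_square)
  moreover have "c * w\<^sup>2 \<le> c * u" using \<open>w\<^sup>2 \<le> u\<close> c by simp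
  moreover have "0 \<le> c * u" using c u by simp
  ultimately have "P \<le> p + Z\<^sup>2 / c" using shifted by linarith
  moreover have "Z * w \<le> Z" using \<open>w \<le> 1\<close> Z by (rule mult_left_le)
  then have "P \<le> p + 3 * Z" using shifted \<open>0 \<le> c * u\<close> Z by linarith
  ultimately show ?thesis by simp
qed

lemma quad_form_le_of_weight_ineq:
  fixes n :: nat and \<rho> :: "nat \<Rightarrow> nat \<Rightarrow> complex" and c :: real and \<pi> :: "nat \<Rightarrow> complex"
  defines "\<beta> \<equiv> (cmod (\<pi> 0))\<^sup>2" and "q \<equiv> \<Sum>i<n. (cmod (\<pi> (2^i)))\<^sup>2"
  assumes dm: "density_matrix n \<rho>" and \<rho>00: "\<rho> 0 0 = complex_of_real (2/3 + c)" and c: "c > 0"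
    and unit: "sq_norm n \<pi> = 1" and weight: "2 * \<beta> * (1 - \<beta>) \<le> q * (1 + \<beta>)"
  shows "Re (quad_form n \<rho> \<pi>) \<le> Re (\<rho> 0 0) + min (3 * zvec_norm n \<rho>) ((zvec_norm n \<rho>)\<^sup>2 / c)"
proof -
  interpret psd_matrix n \<rho> using dm by (rule density_matrix_imp_psd_matrix)
  define W R where "W = weight_one_indices n" and "R = - insert 0 W"
  define x y where "x = (\<lambda>j. ket 0 (\<pi> 0) j + zero_outside W \<pi> j)" and "y = zero_outside R \<pi>"
  have "0 \<notin> W" by (auto simp: W_def weight_one_indices_def)
  then have \<pi>: "\<pi> = (\<lambda>j. x j + y j)"
    by (auto simp: x_def y_def ket_def zero_outside_def R_def)
  have total: "\<beta> + q + sq_norm n y = 1"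
    using unit sum_split_zero_weight_one[of "\<lambda>j. (cmod (\<pi> j))\<^sup>2" n]
    by (simp add: \<beta>_def q_def y_def R_def W_def sq_norm_zero_outside sum_weight_one_indices
        sq_norm_def[of n \<pi>])
  have trace: "diag_weight n \<rho> W + diag_weight n \<rho> R = 1 - Re (\<rho> 0 0)"
  proof -
    have "(\<Sum>k<2^n. \<rho> k k) = 1" using dm unfolding density_matrix_def by blast
    then show ?thesis using sum_split_zero_weight_one[of "\<lambda>k. Re (\<rho> k k)" n]
      by (simp add: diag_weight_def W_def R_def flip: Re_sum)
  qed
  have X: "Re (quad_form n \<rho> x) \<le> \<beta> * Re (\<rho> 0 0) + 2 * zvec_norm n \<rho> * sqrt \<beta> * sqrt q
      + q * diag_weight n \<rho> W"
    using Re_quad_form_low_weight_le[of \<pi>] by (simp add: x_def W_def \<beta>_def q_def)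
  have Y: "Re (quad_form n \<rho> y) \<le> sq_norm n y * diag_weight n \<rho> R"
    by (rule quad_form_le_diag_weight) (simp add: y_def zero_outside_def)
  have P: "Re (quad_form n \<rho> \<pi>) \<le> (sqrt (Re (quad_form n \<rho> x)) + sqrt (Re (quad_form n \<rho> y)))\<^sup>2"
    by (subst \<pi>) (rule Re_quad_form_add_le)
  have "Re (\<rho> 0 0) = 2/3 + c" using \<rho>00 by simp
  from estimates_imp_bound[OF c this _ _ _ total weight diag_weight_nonneg diag_weight_nonneg
      trace zvec_norm_nonneg quad_form_nonneg X quad_form_nonneg Y P]
  show ?thesis by (simp add: \<beta>_def q_def sq_norm_def sum_nonneg)
qed

theorem corollary4p7:
  fixes n :: nat and \<rho> :: "nat \<Rightarrow> nat \<Rightarrow> complex" and c :: real and \<pi> :: "nat \<Rightarrow> complex"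
  assumes "density_matrix n \<rho>"
    and "\<rho> 0 0 = complex_of_real (2/3 + c)"
    and "c > 0"
    and "pure_product_state n \<pi>"
  shows "Re (quad_form n \<rho> \<pi>) \<le> Re (\<rho> 0 0) + min (3 * zvec_norm n \<rho>) ((zvec_norm n \<rho>)\<^sup>2 / c)"
  using assms(1-3) pure_product_state_sq_norm[OF assms(4)] pure_product_state_weight_ineq[OF assms(4)]
  by (rule quad_form_le_of_weight_ineq)

end
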